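(* For a nonnegative integer $d$ let $P_d(x)=\sum_{i=0}^{d}\frac{(x_i)^2(x_{d-i})^2}{i!\,(d-i)!}$, where $x_i=x(x-1)\cdots(x-i+1)$, and let $R_d(x)$ be the remainder upon dividing $P_{d+1}(x)$ by $P_d(x)$, i.e. $R_d(x)=P_{d+1}(x)-\left(\frac{2}{d+1}x^2-\frac{2d}{d+1}x+\frac d2\right)P_d(x)$. Then for every integer $d\ge5$ and every real $x>d/2$, $$-0.5<\frac{R_d(x)}{P_d(x)}<0.$$ *)

theory Defs
  imports Complex_Main
begin

definition ffact :: "real \<Rightarrow> nat \<Rightarrow> real" where
  "ffact x i = (\<Prod>j<i. x - real j)"

definition P :: "nat \<Rightarrow> real \<Rightarrow> real" where
  "P d x = (\<Sum>i=0..d. (ffact x i)^2 * (ffact x (d - i))^2 / (fact i * fact (d - i)))"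

definition R :: "nat \<Rightarrow> real \<Rightarrow> real" where
  "R d x = P (Suc d) x
     - (2 / (real d + 1) * x^2 - 2 * real d / (real d + 1) * x + real d / 2) * P d x"

end

theory Submission
  imports Defs
begin

text \<open>
  Write \<open>P\<^sub>d = \<Sum>\<^sub>i b\<^sub>d(i)\<close> with \<open>b\<^sub>d(i) = x\<^sub>i\<^sup>2 x\<^sub>d\<^sub>-\<^sub>i\<^sup>2 / (i! (d-i)!) \<ge> 0\<close>. Since
  \<open>b\<^sub>d\<^sub>+\<^sub>1(i+1) (i+1) = b\<^sub>d(i) (x-i)\<^sup>2\<close> and \<open>b\<^sub>d\<^sub>+\<^sub>1(i) (d+1-i) = b\<^sub>d(i) (x-d+i)\<^sup>2\<close>,
  splitting the weight \<open>d+1 = i + (d+1-i)\<close> expresses \<open>(d+1) P\<^sub>d\<^sub>+\<^sub>1\<close> through the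
  terms of \<open>P\<^sub>d\<close>; this gives \<open>2(d+1) R\<^sub>d = \<Sum>\<^sub>i b\<^sub>d(i) ((2i-d)\<^sup>2 - d)\<close>, whence
  \<open>R\<^sub>d \<ge> -d/(2(d+1)) P\<^sub>d > -P\<^sub>d/2\<close>. Applying the same two shifts once more to
  the right-hand side for \<open>d+1\<close> yields
  \<open>2(d+2) R\<^sub>d\<^sub>+\<^sub>1 = -(2x-d) \<Sum>\<^sub>j b\<^sub>d(j) (d-2j)\<^sup>2\<close>, which is negative for \<open>x > d/2\<close>
  as soon as some term with \<open>d \<noteq> 2j\<close> is nonzero.
\<close>

lemma ffact_Suc: "ffact x (Suc n) = ffact x n * (x - real n)"
  by (simp add: ffact_def)

lemma ffact_pos: "real k < x + 1 \<Longrightarrow> 0 < ffact x k"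
  unfolding ffact_def by (rule prod_pos) auto

definition P_term :: "nat \<Rightarrow> real \<Rightarrow> nat \<Rightarrow> real" where
  "P_term d x i = (ffact x i)^2 * (ffact x (d - i))^2 / (fact i * fact (d - i))"

lemma P_eq_sum_P_term: "P d x = (\<Sum>i=0..d. P_term d x i)"
  by (simp add: P_def P_term_def)

lemma P_term_nonneg: "0 \<le> P_term d x i"
  by (simp add: P_term_def)

lemma P_term_pos: "real i < x + 1 \<Longrightarrow> real (d - i) < x + 1 \<Longrightarrow> 0 < P_term d x i"
  using ffact_pos[of i x] ffact_pos[of "d - i" x] by (simp add: P_term_def)

lemma sum_P_term_Suc_times_index:
  "(\<Sum>i=0..Suc d. P_term (Suc d) x i * real i * \<phi> i)
   = (\<Sum>j=0..d. P_term d x j * (x - real j)^2 * \<phi> (Suc j))"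
proof -
  have "(\<Sum>i=0..Suc d. P_term (Suc d) x i * real i * \<phi> i)
      = (\<Sum>j=0..d. P_term (Suc d) x (Suc j) * real (Suc j) * \<phi> (Suc j))"
    by (subst sum.atLeast0_atMost_Suc_shift) simp
  also have "\<dots> = (\<Sum>j=0..d. P_term d x j * (x - real j)^2 * \<phi> (Suc j))"
  proof (rule sum.cong)
    fix j assume "j \<in> {0..d}"
    then have shift: "Suc d - Suc j = d - j" by simp
    have fact: "fact (Suc j) = real (Suc j) * (fact j :: real)" by simp
    show "P_term (Suc d) x (Suc j) * real (Suc j) * \<phi> (Suc j)
        = P_term d x j * (x - real j)^2 * \<phi> (Suc j)"
      unfolding P_term_def shift fact ffact_Suc power_mult_distrib
      by (simp del: of_nat_Suc fact_Suc add: field_simps)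
  qed simp
  finally show ?thesis .
qed

lemma sum_P_term_Suc_times_coindex:
  "(\<Sum>i=0..Suc d. P_term (Suc d) x i * real (Suc d - i) * \<phi> i)
   = (\<Sum>j=0..d. P_term d x j * (x - real (d - j))^2 * \<phi> j)"
proof -
  have "(\<Sum>i=0..Suc d. P_term (Suc d) x i * real (Suc d - i) * \<phi> i)
      = (\<Sum>j=0..d. P_term (Suc d) x j * real (Suc d - j) * \<phi> j)"
    by (subst sum.atLeast0_atMost_Suc) simp
  also have "\<dots> = (\<Sum>j=0..d. P_term d x j * (x - real (d - j))^2 * \<phi> j)"
  proof (rule sum.cong)
    fix j assume "j \<in> {0..d}"
    then have shift: "Suc d - j = Suc (d - j)" by simp
    have fact: "fact (Suc (d - j)) = real (Suc (d - j)) * (fact (d - j) :: real)" by simp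
    show "P_term (Suc d) x j * real (Suc d - j) * \<phi> j
        = P_term d x j * (x - real (d - j))^2 * \<phi> j"
      unfolding P_term_def shift fact ffact_Suc power_mult_distrib
      by (simp del: of_nat_Suc fact_Suc add: field_simps)
  qed simp
  finally show ?thesis .
qed

lemma P_Suc_eq_sum_P_term:
  "(real d + 1) * P (Suc d) x
   = (\<Sum>j=0..d. P_term d x j * ((x - real j)^2 + (x - real (d - j))^2))"
proof -
  have "(real d + 1) * P (Suc d) x
      = (\<Sum>i=0..Suc d. P_term (Suc d) x i * real i * 1)
        + (\<Sum>i=0..Suc d. P_term (Suc d) x i * real (Suc d - i) * 1)"
    unfolding P_eq_sum_P_term
    by (simp add: sum_distrib_left sum.distrib[symmetric] algebra_simps of_nat_diff)
  then show ?thesis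
    unfolding sum_P_term_Suc_times_index sum_P_term_Suc_times_coindex
    by (simp add: sum.distrib[symmetric] algebra_simps)
qed

lemma R_eq_sum_P_term:
  "(real d + 1) * R d x
   = (\<Sum>i=0..d. P_term d x i * ((2 * real i - real d)^2 - real d)) / 2"
proof -
  have "(real d + 1) * R d x = (real d + 1) * P (Suc d) x
      - (2 * x^2 - 2 * real d * x + real d * (real d + 1) / 2) * P d x"
  proof -
    have "real d + 1 \<noteq> 0"
      by linarith
    then have "(real d + 1) * (2 / (real d + 1) * x^2) = 2 * x^2"
      and "(real d + 1) * (2 * real d / (real d + 1) * x) = 2 * real d * x"
      by simp_all
    then have "(real d + 1) * (2 / (real d + 1) * x^2 - 2 * real d / (real d + 1) * x + real d / 2)
        = 2 * x^2 - 2 * real d * x + real d * (real d + 1) / 2"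
      by (simp add: algebra_simps)
    then show ?thesis
      unfolding R_def right_diff_distrib by (simp add: mult.assoc)
  qed
  also have "\<dots> = (\<Sum>i=0..d. P_term d x i * ((x - real i)^2 + (x - real (d - i))^2)
      - P_term d x i * (2 * x^2 - 2 * real d * x + real d * (real d + 1) / 2))"
    unfolding P_Suc_eq_sum_P_term sum_subtractf
    by (simp add: P_eq_sum_P_term sum_distrib_left mult.commute[of _ "P_term d x _"])
  also have "\<dots> = (\<Sum>i=0..d. P_term d x i * ((2 * real i - real d)^2 - real d) / 2)"
  proof (rule sum.cong)
    fix i assume "i \<in> {0..d}"
    then have "real (d - i) = real d - real i" by (simp add: of_nat_diff)
    then show "P_term d x i * ((x - real i)^2 + (x - real (d - i))^2)
        - P_term d x i * (2 * x^2 - 2 * real d * x + real d * (real d + 1) / 2)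
        = P_term d x i * ((2 * real i - real d)^2 - real d) / 2"
      by (simp add: algebra_simps power2_eq_square)
  qed simp
  finally show ?thesis
    by (simp add: sum_divide_distrib)
qed

lemma sum_P_term_Suc_times_defect:
  "(\<Sum>i=0..Suc d. P_term (Suc d) x i * ((2 * real i - real (Suc d))^2 - real (Suc d)))
   = - (2 * x - real d) * (\<Sum>j=0..d. P_term d x j * (real d - 2 * real j)^2)"
proof -
  let ?\<psi> = "\<lambda>i. real (Suc d) - 2 * real i"
  have "(\<Sum>i=0..Suc d. P_term (Suc d) x i * ((2 * real i - real (Suc d))^2 - real (Suc d)))
      = (\<Sum>i=0..Suc d. P_term (Suc d) x i * real (Suc d - i) * ?\<psi> i)
        - (\<Sum>i=0..Suc d. P_term (Suc d) x i * real i * ?\<psi> i)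
        - (real d + 1) * P (Suc d) x"
    unfolding P_eq_sum_P_term
    by (simp add: sum_distrib_left sum_subtractf[symmetric] algebra_simps of_nat_diff power2_eq_square)
  also have "\<dots> = (\<Sum>j=0..d. P_term d x j * (x - real (d - j))^2 * ?\<psi> j
        - P_term d x j * (x - real j)^2 * ?\<psi> (Suc j)
        - P_term d x j * ((x - real j)^2 + (x - real (d - j))^2))"
    unfolding sum_P_term_Suc_times_index sum_P_term_Suc_times_coindex P_Suc_eq_sum_P_term
      sum_subtractf ..
  also have "\<dots> = (\<Sum>j=0..d. - (2 * x - real d) * (P_term d x j * (real d - 2 * real j)^2))"
  proof (rule sum.cong)
    fix j assume "j \<in> {0..d}"
    then have "real (d - j) = real d - real j" by (simp add: of_nat_diff)
    then show "P_term d x j * (x - real (d - j))^2 * ?\<psi> j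
        - P_term d x j * (x - real j)^2 * ?\<psi> (Suc j)
        - P_term d x j * ((x - real j)^2 + (x - real (d - j))^2)
        = - (2 * x - real d) * (P_term d x j * (real d - 2 * real j)^2)"
      by (simp add: algebra_simps power2_eq_square)
  qed simp
  finally show ?thesis
    by (simp add: sum_distrib_left)
qed

lemma R_Suc_eq_sum_P_term:
  "(real d + 2) * R (Suc d) x
   = - (2 * x - real d) * (\<Sum>j=0..d. P_term d x j * (real d - 2 * real j)^2) / 2"
  using R_eq_sum_P_term[of "Suc d" x] sum_P_term_Suc_times_defect[of d x]
  by (simp add: add.commute)

lemma P_pos:
  assumes "real d < 2 * x + 1"
  shows "0 < P d x"
  unfolding P_eq_sum_P_term
proof (rule sum_pos2)
  have "real (2 * (d - d div 2)) \<le> real (d + 1)"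
    by simp
  then show "0 < P_term d x (d div 2)"
    using assms by (intro P_term_pos) (simp_all add: real_of_nat_div)
qed (simp_all add: P_term_nonneg)

lemma R_ge: "- (real d / (2 * (real d + 1))) * P d x \<le> R d x"
proof -
  have "- real d * P d x = (\<Sum>i=0..d. P_term d x i * - real d)"
    unfolding P_eq_sum_P_term by (simp add: sum_distrib_left mult.commute)
  also have "\<dots> \<le> (\<Sum>i=0..d. P_term d x i * ((2 * real i - real d)^2 - real d))"
    by (intro sum_mono mult_left_mono) (simp_all add: P_term_nonneg)
  also have "\<dots> = 2 * ((real d + 1) * R d x)"
    by (simp add: R_eq_sum_P_term)
  finally show ?thesis
    by (simp add: field_simps)
qed

lemma R_neg:
  assumes "2 \<le> d" and "real d < 2 * x + 1"
  shows "R d x < 0"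
proof -
  obtain m where d: "d = Suc m" and "1 \<le> m"
    using assms(1) by (cases d) auto
  \<comment> \<open>a middle index, so both falling factorials are positive, with \<open>m - 2j\<close> odd or \<open>2\<close>\<close>
  define j where "j = (m - 1) div 2"
  have "m \<noteq> 2 * j"
    unfolding j_def using \<open>1 \<le> m\<close> by presburger
  then have "real m - 2 * real j \<noteq> 0"
    by linarith
  moreover have "0 < P_term m x j"
  proof (rule P_term_pos)
    show "real j < x + 1"
      using assms(2) d unfolding j_def by (simp add: real_of_nat_div)
    have "real (2 * (m - j)) \<le> real (m + 2)"
      unfolding j_def by simp
    then show "real (m - j) < x + 1"
      using assms(2) d by simp
  qed
  ultimately have "0 < (\<Sum>i=0..m. P_term m x i * (real m - 2 * real i)^2)"
    using \<open>1 \<le> m\<close> by (intro sum_pos2[where i = j]) (simp_all add: P_term_nonneg j_def)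
  moreover have "0 < 2 * x - real m"
    using assms(2) d by simp
  ultimately have "0 < (2 * x - real m) * (\<Sum>i=0..m. P_term m x i * (real m - 2 * real i)^2)"
    by (rule mult_pos_pos[rotated])
  then have "(real m + 2) * R d x < 0"
    unfolding d R_Suc_eq_sum_P_term by linarith
  then show ?thesis
    by (simp add: mult_less_0_iff)
qed

theorem lemma1p5:
  fixes d :: nat and x :: real
  assumes "d \<ge> 5" and "x > real d / 2"
  shows "-0.5 < R d x / P d x \<and> R d x / P d x < 0"
proof -
  have "real d < 2 * x + 1"
    using assms(2) by simp
  then have P: "0 < P d x" and R: "R d x < 0"
    using P_pos R_neg assms(1) by auto
  have "real d / (2 * (real d + 1)) * P d x < 1 / 2 * P d x"
    using P by (intro mult_strict_right_mono) (simp_all add: field_simps)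
  then have "- P d x / 2 < R d x"
    using R_ge[of d x] by linarith
  then show ?thesis
    using P R by (simp add: divide_less_0_iff less_divide_eq)
qed

end
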